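(* Let $0<a<1$. Then, as $t\to-\infty$, $$f(t,a)\sim-\frac{1}{\ln(-t/a)+\ln\bigl(\ln(-t/a)-1\bigr)},$$ where $f(t,a)=t\int_0^1(ax)^{-tx}\,dx$. In particular $f(t,a)\to0$ inverse-logarithmically as $t\to-\infty$.
   Context: For real $a>0$ and real $t$, $f(t,a)=t\int_0^1 (ax)^{-tx}\,dx$, where $(ax)^{-tx}=\exp(-tx\ln(ax))$ for $x\in(0,1]$. The notation $g\sim h$ means $g/h\to1$. *)

theory Defs
  imports "HOL-Analysis.Analysis" "HOL-Library.Landau_Symbols"
begin

text \<open>At x = 0 the integrand value is irrelevant (a null set); we use the formula
  with ln 0 = 0, giving 1, which is also the continuous extension.\<close>
definition f :: "real \<Rightarrow> real \<Rightarrow> real" where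
  "f t a = t * integral {0..1} (\<lambda>x. exp (- t * x * ln (a * x)))"

end

theory Submission
  imports Defs "HOL-Real_Asymp.Real_Asymp"
begin

text \<open>With \<open>s = -t\<close> we have \<open>f t a = - s * I s\<close>, where \<open>I s\<close> is the integral of
  \<open>exp (s * x * ln (a * x))\<close> over \<open>[0, 1]\<close>. Split \<open>[0, 1]\<close> at a point \<open>\<delta>\<close> and put
  \<open>c = - ln (a * \<delta>)\<close>: left of \<open>\<delta>\<close> the integrand is at most \<open>exp (- c * s * x)\<close>, right
  of \<open>\<delta>\<close> it is at least \<open>exp (- c * s * x)\<close> and at most \<open>exp (s * \<delta> * ln a)\<close>.
  Choosing \<open>\<delta>\<close> of order \<open>(ln s)\<^sup>2 / s\<close> for the upper and \<open>1 / (s * (ln s)\<^sup>2)\<close> for the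
  lower bound makes \<open>c \<sim> ln s\<close> in both cases and squeezes \<open>I s\<close> between two functions
  asymptotic to \<open>1 / (s * ln s)\<close>. Finally \<open>ln s \<sim> ln (s / a) + ln (ln (s / a) - 1)\<close>.\<close>

definition self_power_integral :: "real \<Rightarrow> real \<Rightarrow> real" where
  "self_power_integral a s = integral {0..1} (\<lambda>x. exp (s * x * ln (a * x)))"

lemma has_integral_exp_neg_linear:
  fixes k :: real
  assumes "k > 0" "\<alpha> \<le> \<beta>"
  shows "((\<lambda>x. exp (- k * x)) has_integral (exp (- k * \<alpha>) - exp (- k * \<beta>)) / k) {\<alpha>..\<beta>}"
proof -
  have "((\<lambda>x. - exp (- k * x) / k) has_real_derivative exp (- k * x)) (at x within {\<alpha>..\<beta>})"
    for x
    using assms by (auto intro!: derivative_eq_intros)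
  then have "((\<lambda>x. exp (- k * x)) has_integral
      (- exp (- k * \<beta>) / k - - exp (- k * \<alpha>) / k)) {\<alpha>..\<beta>}"
    by (intro fundamental_theorem_of_calculus assms(2))
       (simp add: has_real_derivative_iff_has_vector_derivative)
  then show ?thesis
    by (simp add: diff_divide_distrib)
qed

lemma continuous_on_self_power:
  fixes a s :: real
  assumes "a > 0"
  shows "continuous_on {0..1} (\<lambda>x. exp (s * x * ln (a * x)))"
  unfolding continuous_on_eq_continuous_within
proof
  fix x :: real
  assume x: "x \<in> {0..1}"
  show "continuous (at x within {0..1}) (\<lambda>x. exp (s * x * ln (a * x)))"
  proof (cases "x = 0")
    case True
    have "((\<lambda>x. x * ln (a * x)) \<longlongrightarrow> 0) (at_right 0)"
      using assms by real_asymp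
    then have "((\<lambda>x. exp (s * (x * ln (a * x)))) \<longlongrightarrow> exp (s * 0)) (at_right 0)"
      by (intro tendsto_intros)
    then show ?thesis
      using True by (simp add: continuous_within at_within_Icc_at_right mult.assoc)
  next
    case False
    with x assms have "continuous (at x) (\<lambda>x. exp (s * x * ln (a * x)))"
      by (auto intro!: continuous_intros)
    then show ?thesis
      by (rule continuous_at_imp_continuous_within)
  qed
qed

lemma self_power_integrable:
  fixes a s :: real
  assumes "a > 0"
  shows "(\<lambda>x. exp (s * x * ln (a * x))) integrable_on {0..1}"
  using continuous_on_self_power[OF assms] by (rule integrable_continuous_interval)

lemma self_power_integral_le:
  fixes a s \<delta> :: real
  assumes "0 < a" "a < 1" "0 < s" "0 < \<delta>" "a * \<delta> < 1"
  shows "self_power_integral a s \<le> 1 / (- ln (a * \<delta>) * s) + exp (s * \<delta> * ln a)"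
proof -
  define c where "c = - ln (a * \<delta>)"
  have "c > 0"
    using assms by (simp add: c_def)
  have bound: "exp (s * x * ln (a * x)) \<le> exp (- (c * s) * x) + exp (s * \<delta> * ln a)"
    if x: "x \<in> {0..1}" for x
  proof (cases "x = 0")
    case True
    then show ?thesis by simp
  next
    case False
    with x have "x > 0" by simp
    show ?thesis
    proof (cases "x \<le> \<delta>")
      case True
      with \<open>x > 0\<close> assms have "ln (a * x) \<le> - c"
        by (simp add: c_def)
      with \<open>x > 0\<close> assms have "s * x * ln (a * x) \<le> s * x * (- c)"
        by (intro mult_left_mono) auto
      then have "exp (s * x * ln (a * x)) \<le> exp (- (c * s) * x)"
        by (simp add: mult_ac)
      then show ?thesis
        using exp_gt_zero[of "s * \<delta> * ln a"] by linarith
    next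
      case False
      from x \<open>x > 0\<close> assms have "x * ln (a * x) \<le> x * ln a"
        by (intro mult_left_mono) (auto simp: mult_le_cancel_left1)
      also from False assms have "\<dots> \<le> \<delta> * ln a"
        by (intro mult_right_mono_neg) auto
      finally have "s * (x * ln (a * x)) \<le> s * (\<delta> * ln a)"
        using assms by (intro mult_left_mono) auto
      then have "exp (s * x * ln (a * x)) \<le> exp (s * \<delta> * ln a)"
        by (simp add: mult.assoc)
      then show ?thesis
        using exp_gt_zero[of "- (c * s) * x"] by linarith
    qed
  qed
  have "((\<lambda>x. exp (- (c * s) * x) + exp (s * \<delta> * ln a)) has_integral
      (1 - exp (- (c * s))) / (c * s) + exp (s * \<delta> * ln a)) {0..1}"
    using has_integral_add[OF has_integral_exp_neg_linear[of "c * s" 0 1]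
        has_integral_const_real[of "exp (s * \<delta> * ln a)" 0 1]] \<open>c > 0\<close> assms
    by simp
  then have "self_power_integral a s \<le> (1 - exp (- (c * s))) / (c * s) + exp (s * \<delta> * ln a)"
    unfolding self_power_integral_def
    using has_integral_le[OF integrable_integral[OF self_power_integrable[OF assms(1)]] _ bound]
    by blast
  also have "\<dots> \<le> 1 / (c * s) + exp (s * \<delta> * ln a)"
    using \<open>c > 0\<close> assms by (intro add_right_mono divide_right_mono) auto
  finally show ?thesis
    by (simp add: c_def)
qed

lemma self_power_integral_ge:
  fixes a s \<epsilon> :: real
  assumes "0 < a" "0 < s" "0 < \<epsilon>" "\<epsilon> \<le> 1" "a * \<epsilon> < 1"
  shows "(exp (ln (a * \<epsilon>) * s * \<epsilon>) - exp (ln (a * \<epsilon>) * s)) / (- ln (a * \<epsilon>) * s)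
           \<le> self_power_integral a s"
proof -
  define c where "c = - ln (a * \<epsilon>)"
  have "c > 0"
    using assms by (simp add: c_def)
  have bound: "exp (- (c * s) * x) \<le> exp (s * x * ln (a * x))" if x: "x \<in> {\<epsilon>..1}" for x
  proof -
    from x assms have "- c \<le> ln (a * x)"
      by (simp add: c_def)
    with x assms have "s * x * (- c) \<le> s * x * ln (a * x)"
      by (intro mult_left_mono) auto
    then show ?thesis
      by (simp add: mult_ac)
  qed
  have integrable: "(\<lambda>x. exp (s * x * ln (a * x))) integrable_on {\<epsilon>..1}"
    using assms by (intro integrable_on_subinterval[OF self_power_integrable[OF assms(1)]]) auto
  have "(exp (- (c * s) * \<epsilon>) - exp (- (c * s) * 1)) / (c * s)
      \<le> integral {\<epsilon>..1} (\<lambda>x. exp (s * x * ln (a * x)))"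
    using \<open>c > 0\<close> assms bound
    by (intro has_integral_le[OF has_integral_exp_neg_linear integrable_integral[OF integrable]])
       auto
  also have "\<dots> \<le> self_power_integral a s"
    unfolding self_power_integral_def
    using self_power_integrable[OF assms(1)] integrable assms by (intro integral_subset_le) auto
  finally show ?thesis
    by (simp add: c_def mult_ac)
qed

lemma self_power_integral_asymp_equiv:
  fixes a :: real
  assumes "0 < a" "a < 1"
  shows "self_power_integral a \<sim>[at_top] (\<lambda>s. 1 / (s * ln s))"
proof -
  \<comment> \<open>With \<open>b = - ln a\<close> the tail term \<open>exp (s * \<delta> s * ln a)\<close> is \<open>exp (- (ln s)\<^sup>2)\<close>; \<open>b\<close> is
    a fresh variable because \<open>real_asymp\<close> cannot determine the sign of \<open>ln a\<close> itself.\<close>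
  obtain b where "b > 0" and ln_a: "ln a = - b"
    using assms by (intro that[of "- ln a"]) auto
  define \<delta> where "\<delta> s = (ln s)\<^sup>2 / (b * s)" for s
  define \<epsilon> where "\<epsilon> s = 1 / (a * s * (ln s)\<^sup>2)" for s
  define upper where "upper s = 1 / (- ln (a * \<delta> s) * s) + exp (s * \<delta> s * ln a)" for s
  define lower where "lower s = (exp (ln (a * \<epsilon> s) * s * \<epsilon> s) - exp (ln (a * \<epsilon> s) * s))
    / (- ln (a * \<epsilon> s) * s)" for s
  have upper_equiv: "upper \<sim>[at_top] (\<lambda>s. 1 / (s * ln s))"
    unfolding upper_def \<delta>_def ln_a using assms \<open>b > 0\<close> by real_asymp
  have lower_equiv: "lower \<sim>[at_top] (\<lambda>s. 1 / (s * ln s))"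
    unfolding lower_def \<epsilon>_def using assms by real_asymp
  have "eventually (\<lambda>s. self_power_integral a s \<le> upper s) at_top"
  proof -
    have "\<forall>\<^sub>F s in at_top. 0 < s \<and> 0 < \<delta> s \<and> a * \<delta> s < 1"
      unfolding \<delta>_def eventually_conj_iff using assms \<open>b > 0\<close> by (intro conjI; real_asymp)
    then show ?thesis
      by eventually_elim
        (unfold upper_def, elim conjE, rule self_power_integral_le, (use assms in simp_all))
  qed
  moreover have "eventually (\<lambda>s. lower s \<le> self_power_integral a s) at_top"
  proof -
    have "\<forall>\<^sub>F s in at_top. 0 < s \<and> 0 < \<epsilon> s \<and> \<epsilon> s \<le> 1 \<and> a * \<epsilon> s < 1"
      unfolding \<epsilon>_def eventually_conj_iff using assms by (intro conjI; real_asymp)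
    then show ?thesis
      by eventually_elim
        (unfold lower_def, elim conjE, rule self_power_integral_ge, (use assms in simp_all))
  qed
  ultimately have "eventually (\<lambda>s. self_power_integral a s \<in> {lower s..upper s}) at_top"
    by eventually_elim simp
  then show ?thesis
    by (rule asymp_equiv_sandwich_real[OF lower_equiv upper_equiv])
qed

theorem mainTheorem7:
  fixes a :: real
  assumes "0 < a" and "a < 1"
  shows "(\<lambda>t. f t a) \<sim>[at_bot]
           (\<lambda>t. - 1 / (ln (- t / a) + ln (ln (- t / a) - 1)))"
proof -
  have "(\<lambda>s. s * self_power_integral a s) \<sim>[at_top] (\<lambda>s. s * (1 / (s * ln s)))"
    using self_power_integral_asymp_equiv[OF assms] by (intro asymp_equiv_intros)
  also have "(\<lambda>s. s * (1 / (s * ln s))) \<sim>[at_top] (\<lambda>s. 1 / (ln (s / a) + ln (ln (s / a) - 1)))"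
    using assms by real_asymp
  finally have "(\<lambda>s. - (s * self_power_integral a s))
      \<sim>[at_top] (\<lambda>s. - (1 / (ln (s / a) + ln (ln (s / a) - 1))))"
    by (rule asymp_equiv_uminus)
  then have "(\<lambda>s. f (- s) a) \<sim>[at_top] (\<lambda>s. - 1 / (ln (- (- s) / a) + ln (ln (- (- s) / a) - 1)))"
    by (simp add: f_def self_power_integral_def)
  then show ?thesis
    by (simp add: at_bot_mirror asymp_equiv_filtermap_iff)
qed

end
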